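(* Let $D\ge 1$ and let $\mathcal{X}=\{\boldsymbol{x}_1,\dots,\boldsymbol{x}_n\}\subset\mathbb{R}^D$ be a dataset (points counted with multiplicity), and let $\mathcal{Y}\subset\mathcal{X}$ be a sub-collection such that: (i) $\#(\mathcal{Y})>n-n/(2D+2)$; (ii) there is a nonzero $\boldsymbol{v}\in\mathbb{R}^D$ with $\mathcal{Y}\subset\overline{H(\boldsymbol{0},\boldsymbol{v})}=\{\boldsymbol{x}:\boldsymbol{v}^\top\boldsymbol{x}\ge 0\}$; (iii) $\mathcal{Y}\cap L(\boldsymbol{0},\boldsymbol{v})$ is either $\{\boldsymbol{0}\}$ or empty, where $L(\boldsymbol{0},\boldsymbol{v})=\{\boldsymbol{x}:\boldsymbol{v}^\top\boldsymbol{x}=0\}$. Then $$\mathrm{relint}\big(\mathcal{D}_{1/(2D+2)}(\mathcal{X})\big)\subset\mathrm{conv}(\mathcal{Y})\subset H(\boldsymbol{0},\boldsymbol{v})\cup\{\boldsymbol{0}\},$$ where $H(\boldsymbol{0},\boldsymbol{v})=\{\boldsymbol{x}:\boldsymbol{v}^\top\boldsymbol{x}>0\}$. Moreover, if $\#(\mathcal{Y}\cap L(\boldsymbol{0},\boldsymbol{v}))<n/2$ (counted with multiplicity), then $\mathrm{relint}\big(\mathcal{D}_{1/(2D+2)}(\mathcal{X})\big)\subset H(\boldsymbol{0},\boldsymbol{v})$.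
   Context: Tukey depth of $\boldsymbol{x}\in\mathbb{R}^D$ in $\mathcal{X}=\{\boldsymbol{x}_1,\dots,\boldsymbol{x}_n\}$: $\mathrm{depth}(\boldsymbol{x},\mathcal{X})=\min_{\boldsymbol{u}\in S^{D-1}}\#\{i:\boldsymbol{u}^\top(\boldsymbol{x}_i-\boldsymbol{x})\ge 0\}$. The $\beta$-depth level set is $\mathcal{D}_\beta(\mathcal{X})=\{\boldsymbol{y}\in\mathbb{R}^D:\mathrm{depth}(\boldsymbol{y},\mathcal{X})\ge\beta\,\#(\mathcal{X})\}$. $\mathrm{conv}$ denotes convex hull and $\mathrm{relint}$ relative interior. *)

theory Defs
  imports "HOL-Analysis.Analysis"
begin

text \<open>A dataset with multiplicity is an indexed family x over a finite index set I.
  Tukey depth of y: minimum over unit vectors u of the number of indices i with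
  u \<bullet> (x i - y) \<ge> 0.\<close>

definition tukey_depth :: "'i set \<Rightarrow> ('i \<Rightarrow> 'a::euclidean_space) \<Rightarrow> 'a \<Rightarrow> nat" where
  "tukey_depth I x y = Inf {card {i \<in> I. u \<bullet> (x i - y) \<ge> 0} | u. norm u = 1}"

definition depth_level_set :: "real \<Rightarrow> 'i set \<Rightarrow> ('i \<Rightarrow> 'a::euclidean_space) \<Rightarrow> 'a set" where
  "depth_level_set \<beta> I x = {y. real (tukey_depth I x y) \<ge> \<beta> * real (card I)}"

end

theory Submission
  imports Defs
begin

(* A point outside conv Y is separated from Y by a hyperplane, so its depth is at most
   n - #Y < n/(2D+2): the depth region lies in conv Y, which lies in the open halfspace plus
   the origin. Suppose the origin were relatively interior to the depth region. Project the
   points of Y strictly above the hyperplane radially onto the affine hyperplane v.x = 1 and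
   take a centerpoint c there (Helly's theorem in dimension D - 1). A small positive multiple
   of c has depth at least n/(2D+2): every closed halfspace through it contains either a closed
   halfspace through the origin or a 1/D fraction of the more than nD/(2D+2) projected points.
   Relative interiority then puts a negative multiple of c into the depth region, outside the
   closed halfspace v.x >= 0. *)

lemma affine_dependent_if_card_gt_aff_dim:
  fixes S :: "'a::euclidean_space set"
  assumes "S \<subseteq> A" "aff_dim A + 2 \<le> int (card S)"
  shows "affine_dependent S"
  using independent_card_le_aff_dim[OF assms(1)] assms(2) by linarith

(* Radon's theorem applied to one witness from each of the intersections of all members but one. *)
lemma Inter_nonempty_if_Inter_remove_nonempty:
  fixes \<F> :: "'a::euclidean_space set set"
  assumes fin: "finite \<F>" and conv: "\<And>S. S \<in> \<F> \<Longrightarrow> convex S"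
    and dim: "aff_dim (\<Union>\<F>) \<le> int d" and big: "d + 2 \<le> card \<F>"
    and remove: "\<And>S. S \<in> \<F> \<Longrightarrow> \<Inter>(\<F> - {S}) \<noteq> {}"
  shows "\<Inter>\<F> \<noteq> {}"
proof -
  have "\<forall>S\<in>\<F>. \<exists>y. y \<in> \<Inter>(\<F> - {S})"
    using remove by blast
  then obtain X where X: "\<And>S. S \<in> \<F> \<Longrightarrow> X S \<in> \<Inter>(\<F> - {S})"
    by metis
  show ?thesis
  proof (cases "inj_on X \<F>")
    case False
    then obtain S T where "S \<noteq> T" and ST: "S \<in> \<F>" "T \<in> \<F>" "X S = X T"
      unfolding inj_on_def by auto
    then have "X S \<in> \<Inter>(\<F> - {S}) \<inter> \<Inter>(\<F> - {T})"
      using X[OF ST(1)] X[OF ST(2)] by simp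
    moreover have "\<Inter>(\<F> - {S}) \<inter> \<Inter>(\<F> - {T}) = \<Inter>\<F>"
      using \<open>S \<noteq> T\<close> by auto
    ultimately show ?thesis by auto
  next
    case True
    have "X S \<in> \<Union>\<F>" if "S \<in> \<F>" for S
    proof -
      have "\<not> \<F> \<subseteq> {S}"
        using card_mono[of "{S}" \<F>] big by auto
      then show ?thesis
        using X[OF that] by blast
    qed
    then have "affine_dependent (X ` \<F>)"
      using dim big card_image[OF True] by (intro affine_dependent_if_card_gt_aff_dim[of _ "\<Union>\<F>"]) auto
    then obtain M P where MP: "M \<inter> P = {}" "M \<union> P = X ` \<F>" "convex hull M \<inter> convex hull P \<noteq> {}"
      using Radon_partition[of "X ` \<F>"] fin by auto
    then obtain \<G> \<H> where gh: "M = X ` \<G>" "P = X ` \<H>" "\<G> \<subseteq> \<F>" "\<H> \<subseteq> \<F>"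
      by (metis Un_upper1 Un_upper2 subset_imageE)
    have "X ` \<F> = X ` (\<G> \<union> \<H>)"
      using MP(2) gh by auto
    then have \<F>: "\<F> = \<G> \<union> \<H>"
      using True gh by (simp add: inj_on_image_eq_iff)
    have disj: "\<G> \<inter> \<H> = {}"
      using MP(1) gh True by (auto simp: inj_on_def)
    have "convex hull (X ` \<H>) \<subseteq> \<Inter>\<G>" "convex hull (X ` \<G>) \<subseteq> \<Inter>\<H>"
      by (rule hull_minimal; use X disj \<F> conv in \<open>auto simp: convex_Inter\<close>)+
    then show ?thesis
      unfolding \<F> using MP(3) gh by blast
  qed
qed

theorem Helly_aff_dim:
  fixes \<F> :: "'a::euclidean_space set set"
  assumes "finite \<F>" "\<And>S. S \<in> \<F> \<Longrightarrow> convex S" "aff_dim (\<Union>\<F>) \<le> int d"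
    and "\<And>\<T>. \<T> \<subseteq> \<F> \<Longrightarrow> card \<T> \<le> d + 1 \<Longrightarrow> \<Inter>\<T> \<noteq> {}"
  shows "\<Inter>\<F> \<noteq> {}"
  using assms
proof (induction "card \<F>" arbitrary: \<F> rule: less_induct)
  case less
  show ?case
  proof (cases "card \<F> \<le> d + 1")
    case True
    then show ?thesis
      using less.prems(4) by blast
  next
    case False
    show ?thesis
    proof (rule Inter_nonempty_if_Inter_remove_nonempty)
      fix S assume "S \<in> \<F>"
      show "\<Inter>(\<F> - {S}) \<noteq> {}"
      proof (rule less.hyps)
        show "card (\<F> - {S}) < card \<F>"
          using \<open>S \<in> \<F>\<close> less.prems(1) by (meson card_Diff1_less)
        show "aff_dim (\<Union>(\<F> - {S})) \<le> int d"
          using less.prems(3) aff_dim_subset[of "\<Union>(\<F> - {S})" "\<Union>\<F>"] by force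
      qed (use less.prems in \<open>auto simp: subset_Diff_insert\<close>)
    qed (use less.prems False in auto)
  qed
qed

lemma common_element_of_large_subsets:
  fixes P :: "'i set" and \<U> :: "'i set set"
  assumes P: "finite P" "P \<noteq> {}" and card_\<U>: "card \<U> \<le> k"
    and large: "\<And>Q. Q \<in> \<U> \<Longrightarrow> Q \<subseteq> P \<and> k * card (P - Q) < card P"
  shows "\<exists>j\<in>P. \<forall>Q\<in>\<U>. j \<in> Q"
proof (cases "\<U> = {}")
  case True
  then show ?thesis using P by auto
next
  case False
  have fin: "finite \<U>"
    using large P(1) by (metis Pow_iff finite_Pow_iff finite_subset subsetI)
  have "k * (\<Sum>Q\<in>\<U>. card (P - Q)) = (\<Sum>Q\<in>\<U>. k * card (P - Q))"
    by (simp add: sum_distrib_left)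
  also have "\<dots> < (\<Sum>Q\<in>\<U>. card P)"
    using large by (intro sum_strict_mono[OF fin False]) auto
  also have "\<dots> \<le> k * card P"
    using card_\<U> by simp
  finally have "card (\<Union>Q\<in>\<U>. P - Q) < card P"
    using card_UN_le[OF fin, of "\<lambda>Q. P - Q"] by (meson le_less_trans mult_less_cancel1)
  then have "\<not> P \<subseteq> (\<Union>Q\<in>\<U>. P - Q)"
    using P(1) by (meson card_mono finite_UN_I fin finite_Diff not_le)
  then show ?thesis by blast
qed

lemma centerpoint_exists:
  fixes p :: "'i \<Rightarrow> 'a::euclidean_space"
  assumes P: "finite P" "P \<noteq> {}" and dim: "aff_dim (p ` P) \<le> int d"
  shows "\<exists>c \<in> convex hull (p ` P). \<forall>u. card P \<le> (d + 1) * card {j\<in>P. u \<bullet> c \<le> u \<bullet> p j}"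
proof -
  define good where "good = {Q. Q \<subseteq> P \<and> (d + 1) * card (P - Q) < card P}"
  define \<F> where "\<F> = (\<lambda>Q. convex hull (p ` Q)) ` good"
  have "P \<in> good"
    using P by (simp add: good_def card_gt_0_iff)
  have "\<Inter>\<F> \<noteq> {}"
  proof (rule Helly_aff_dim)
    show "finite \<F>"
      using P(1) by (simp add: \<F>_def good_def)
    have "\<Union>\<F> \<subseteq> convex hull (p ` P)"
      unfolding \<F>_def good_def by (auto intro: hull_mono[OF image_mono, THEN subsetD])
    then show "aff_dim (\<Union>\<F>) \<le> int d"
      using dim aff_dim_subset aff_dim_convex_hull by (metis order_trans)
    fix \<T> assume "\<T> \<subseteq> \<F>" "card \<T> \<le> d + 1"
    then obtain \<U> where \<U>: "\<U> \<subseteq> good" "inj_on (\<lambda>Q. convex hull (p ` Q)) \<U>" "\<T> = (\<lambda>Q. convex hull (p ` Q)) ` \<U>"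
      unfolding \<F>_def subset_image_inj by blast
    then obtain j where "\<forall>Q\<in>\<U>. j \<in> Q"
      using common_element_of_large_subsets[OF P, of \<U> "d + 1"] \<open>card \<T> \<le> d + 1\<close>
      by (auto simp: good_def card_image)
    then have "p j \<in> \<Inter>\<T>"
      using \<U>(3) by (auto intro: hull_inc)
    then show "\<Inter>\<T> \<noteq> {}" by blast
  qed (auto simp: \<F>_def)
  then obtain c where c: "c \<in> \<Inter>\<F>" by blast
  have "card P \<le> (d + 1) * card {j\<in>P. u \<bullet> c \<le> u \<bullet> p j}" for u
  proof (rule ccontr)
    define Q where "Q = {j\<in>P. u \<bullet> p j < u \<bullet> c}"
    assume "\<not> ?thesis"
    moreover have "P - Q = {j\<in>P. u \<bullet> c \<le> u \<bullet> p j}"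
      by (auto simp: Q_def)
    ultimately have "Q \<in> good"
      by (auto simp: good_def Q_def)
    then have "c \<in> convex hull (p ` Q)"
      using c by (auto simp: \<F>_def)
    moreover have "convex hull (p ` Q) \<subseteq> {w. u \<bullet> w < u \<bullet> c}"
      by (rule hull_minimal) (auto simp: Q_def convex_halfspace_lt)
    ultimately show False by auto
  qed
  moreover have "c \<in> convex hull (p ` P)"
    using c \<open>P \<in> good\<close> by (auto simp: \<F>_def)
  ultimately show ?thesis by blast
qed

lemma tukey_depth_attained:
  fixes x :: "'i \<Rightarrow> 'a::euclidean_space"
  obtains u where "norm u = 1" "tukey_depth I x y = card {i \<in> I. u \<bullet> (x i - y) \<ge> 0}"
proof -
  obtain b :: 'a where "b \<in> Basis"
    using nonempty_Basis by blast
  then have "{card {i \<in> I. u \<bullet> (x i - y) \<ge> 0} | u. norm u = 1} \<noteq> {}"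
    using norm_Basis by blast
  from Inf_nat_def1[OF this] show ?thesis
    using that unfolding tukey_depth_def by auto
qed

lemma tukey_depth_le:
  fixes x :: "'i \<Rightarrow> 'a::euclidean_space"
  assumes "u \<noteq> 0"
  shows "tukey_depth I x y \<le> card {i \<in> I. u \<bullet> (x i - y) \<ge> 0}"
proof -
  define w where "w = u /\<^sub>R norm u"
  have "{i \<in> I. w \<bullet> (x i - y) \<ge> 0} = {i \<in> I. u \<bullet> (x i - y) \<ge> 0}"
    using assms by (auto simp: w_def zero_le_mult_iff)
  moreover have "tukey_depth I x y \<le> card {i \<in> I. w \<bullet> (x i - y) \<ge> 0}"
    unfolding tukey_depth_def using assms by (intro cInf_lower) (auto intro!: exI[of _ w] simp: w_def)
  ultimately show ?thesis by simp
qed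

lemma tukey_depth_le_card_Diff:
  fixes x :: "'i \<Rightarrow> 'a::euclidean_space"
  assumes "finite I" "J \<subseteq> I" "y \<notin> convex hull (x ` J)"
  shows "tukey_depth I x y \<le> card (I - J)"
proof (cases "J = {}")
  case True
  obtain b :: 'a where "b \<in> Basis"
    using nonempty_Basis by blast
  then show ?thesis
    using True tukey_depth_le[of b I x y] card_mono[OF \<open>finite I\<close>, of "{i \<in> I. b \<bullet> (x i - y) \<ge> 0}"]
    by (auto simp: nonzero_Basis)
next
  case False
  have "closed (convex hull (x ` J))"
    using assms(1,2) finite_subset by (blast intro: compact_imp_closed finite_imp_compact_convex_hull)
  then obtain a b where ab: "a \<bullet> y < b" "\<forall>w\<in>convex hull (x ` J). b < a \<bullet> w"
    using separating_hyperplane_closed_point[OF convex_convex_hull _ assms(3)] by blast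
  then have "a \<bullet> x j > b" if "j \<in> J" for j
    using that by (simp add: hull_inc)
  then have "{i \<in> I. (- a) \<bullet> (x i - y) \<ge> 0} \<subseteq> I - J"
    using ab(1) by (force simp: inner_diff_right)
  moreover have "- a \<noteq> 0"
    using ab \<open>J \<noteq> {}\<close> by (force simp: hull_inc)
  ultimately show ?thesis
    using tukey_depth_le[of "- a" I x y] card_mono[OF finite_Diff[OF \<open>finite I\<close>]] le_trans by blast
qed

lemma depth_level_set_subset_convex_hull:
  fixes x :: "'i \<Rightarrow> 'a::euclidean_space"
  assumes "finite I" "J \<subseteq> I" "real (card (I - J)) < \<beta> * real (card I)"
  shows "depth_level_set \<beta> I x \<subseteq> convex hull (x ` J)"
  using tukey_depth_le_card_Diff[OF assms(1,2)] assms(3)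
  by (force simp: depth_level_set_def)

lemma convex_open_halfspace_Un_zero:
  fixes v :: "'a::real_inner"
  shows "convex ({y. 0 < v \<bullet> y} \<union> {0})"
proof (rule convexI)
  fix a b :: 'a and s t :: real
  assume a: "a \<in> {y. 0 < v \<bullet> y} \<union> {0}" and b: "b \<in> {y. 0 < v \<bullet> y} \<union> {0}"
    and "0 \<le> s" "0 \<le> t" "s + t = 1"
  then consider "s *\<^sub>R a + t *\<^sub>R b = 0" | "0 < s * (v \<bullet> a) \<or> 0 < t * (v \<bullet> b)"
    by (metis (mono_tags, lifting) Un_iff add_0 mem_Collect_eq mult_pos_pos order_le_less
        scaleR_eq_0_iff singletonD)
  then show "s *\<^sub>R a + t *\<^sub>R b \<in> {y. 0 < v \<bullet> y} \<union> {0}"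
    using a b \<open>0 \<le> s\<close> \<open>0 \<le> t\<close> by cases (auto simp: inner_add_right add_pos_nonneg add_nonneg_pos)
qed

lemma rel_interior_extend_beyond:
  fixes S :: "'a::euclidean_space set"
  assumes "a \<in> rel_interior S" "b \<in> S"
  shows "\<exists>e>0. a - e *\<^sub>R (b - a) \<in> S"
proof (cases "b = a")
  case True
  then show ?thesis
    using assms(1) rel_interior_subset by (intro exI[of _ 1]) auto
next
  case False
  obtain r where "r > 0" and r: "cball a r \<inter> affine hull S \<subseteq> S"
    using assms(1) mem_rel_interior_cball by blast
  define e where "e = r / norm (b - a)"
  have "e > 0"
    using \<open>r > 0\<close> False by (simp add: e_def)
  have "a - e *\<^sub>R (b - a) \<in> cball a r"
    using False \<open>r > 0\<close> by (simp add: e_def dist_norm)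
  moreover have "(1 + e) *\<^sub>R a + (- e) *\<^sub>R b \<in> affine hull S"
    using assms rel_interior_subset
    by (intro mem_affine[OF affine_affine_hull]) (auto intro: hull_inc)
  then have "a - e *\<^sub>R (b - a) \<in> affine hull S"
    by (simp add: algebra_simps)
  ultimately show ?thesis
    using \<open>e > 0\<close> r by blast
qed

lemma tukey_depth_scaleR_ge:
  fixes x :: "'i \<Rightarrow> 'a::euclidean_space"
  assumes "finite I" "P \<subseteq> I" "0 < t" "\<forall>j\<in>P. t \<le> v \<bullet> x j"
    and depth0: "r \<le> real (tukey_depth I x 0)"
    and central: "\<And>u. r \<le> real (card {j\<in>P. u \<bullet> c \<le> u \<bullet> (x j /\<^sub>R (v \<bullet> x j))})"
  shows "r \<le> real (tukey_depth I x (t *\<^sub>R c))"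
proof -
  obtain u :: 'a where "norm u = 1"
    and u: "tukey_depth I x (t *\<^sub>R c) = card {i \<in> I. u \<bullet> (x i - t *\<^sub>R c) \<ge> 0}"
    using tukey_depth_attained by metis
  show ?thesis
  proof (cases "u \<bullet> c \<le> 0")
    case True
    then have "t * (u \<bullet> c) \<le> 0"
      using \<open>0 < t\<close> by (simp add: mult_nonneg_nonpos)
    then have "{i \<in> I. u \<bullet> (x i - 0) \<ge> 0} \<subseteq> {i \<in> I. u \<bullet> (x i - t *\<^sub>R c) \<ge> 0}"
      by (auto simp: inner_diff_right)
    then have "card {i \<in> I. u \<bullet> (x i - 0) \<ge> 0} \<le> tukey_depth I x (t *\<^sub>R c)"
      unfolding u using \<open>finite I\<close> by (intro card_mono) auto
    moreover have "tukey_depth I x 0 \<le> card {i \<in> I. u \<bullet> (x i - 0) \<ge> 0}"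
      using \<open>norm u = 1\<close> by (intro tukey_depth_le) auto
    ultimately show ?thesis
      using depth0 by linarith
  next
    case False
    have "u \<bullet> (t *\<^sub>R c) \<le> u \<bullet> x j" if "j \<in> P" "u \<bullet> c \<le> u \<bullet> (x j /\<^sub>R (v \<bullet> x j))" for j
    proof -
      have vx: "t \<le> v \<bullet> x j"
        using assms(4) that(1) by blast
      have "u \<bullet> (t *\<^sub>R c) \<le> (v \<bullet> x j) * (u \<bullet> c)"
        using False vx by (simp add: mult_right_mono)
      also have "\<dots> \<le> (v \<bullet> x j) * (u \<bullet> (x j /\<^sub>R (v \<bullet> x j)))"
        using that(2) vx \<open>0 < t\<close> by (simp add: mult_left_mono)
      also have "\<dots> = u \<bullet> x j"
        using vx \<open>0 < t\<close> by simp
      finally show ?thesis .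
    qed
    then have "{j\<in>P. u \<bullet> c \<le> u \<bullet> (x j /\<^sub>R (v \<bullet> x j))} \<subseteq> {i \<in> I. u \<bullet> (x i - t *\<^sub>R c) \<ge> 0}"
      using assms(2) by (auto simp: inner_diff_right)
    then have "card {j\<in>P. u \<bullet> c \<le> u \<bullet> (x j /\<^sub>R (v \<bullet> x j))} \<le> tukey_depth I x (t *\<^sub>R c)"
      unfolding u using \<open>finite I\<close> by (intro card_mono) auto
    then show ?thesis
      using central[of u] by linarith
  qed
qed

lemma deep_point_in_open_halfspace:
  fixes x :: "'i \<Rightarrow> 'a::euclidean_space"
  assumes "finite I" "P \<subseteq> I" "P \<noteq> {}" and pos: "\<forall>j\<in>P. 0 < v \<bullet> x j"
    and many: "r * real DIM('a) \<le> real (card P)" and depth0: "r \<le> real (tukey_depth I x 0)"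
  shows "\<exists>y. 0 < v \<bullet> y \<and> r \<le> real (tukey_depth I x y)"
proof -
  have "v \<noteq> 0"
    using pos \<open>P \<noteq> {}\<close> by force
  define p where "p j = x j /\<^sub>R (v \<bullet> x j)" for j
  have p_hyperplane: "p ` P \<subseteq> {w. v \<bullet> w = 1}"
    using pos by (auto simp: p_def)
  then have "aff_dim (p ` P) \<le> int (DIM('a) - 1)"
    using aff_dim_subset[OF p_hyperplane] \<open>v \<noteq> 0\<close> by simp
  then obtain c where "c \<in> convex hull (p ` P)"
    and central: "\<And>u. card P \<le> DIM('a) * card {j\<in>P. u \<bullet> c \<le> u \<bullet> p j}"
    using centerpoint_exists[of P p "DIM('a) - 1"] \<open>finite I\<close> \<open>P \<subseteq> I\<close> \<open>P \<noteq> {}\<close>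
    by (auto intro: finite_subset)
  moreover have "convex hull (p ` P) \<subseteq> {w. v \<bullet> w = 1}"
    using p_hyperplane convex_hyperplane by (rule hull_minimal)
  ultimately have "v \<bullet> c = 1"
    by blast
  define t where "t = Min ((\<lambda>j. v \<bullet> x j) ` P)"
  have "finite P"
    using \<open>finite I\<close> \<open>P \<subseteq> I\<close> finite_subset by blast
  then have "0 < t" "\<forall>j\<in>P. t \<le> v \<bullet> x j"
    using pos \<open>P \<noteq> {}\<close> by (auto simp: t_def)
  have "r \<le> real (card {j\<in>P. u \<bullet> c \<le> u \<bullet> p j})" for u
  proof -
    have "real (card P) \<le> real (card {j\<in>P. u \<bullet> c \<le> u \<bullet> p j}) * real DIM('a)"
      using central[of u] by (metis mult.commute of_nat_mono of_nat_mult)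
    then have "r * real DIM('a) \<le> real (card {j\<in>P. u \<bullet> c \<le> u \<bullet> p j}) * real DIM('a)"
      using many by linarith
    then show ?thesis
      using mult_le_cancel_right_pos[of "real DIM('a)"] by simp
  qed
  then have "r \<le> real (tukey_depth I x (t *\<^sub>R c))"
    using tukey_depth_scaleR_ge[OF \<open>finite I\<close> \<open>P \<subseteq> I\<close> \<open>0 < t\<close> \<open>\<forall>j\<in>P. t \<le> v \<bullet> x j\<close> depth0]
    by (simp add: p_def)
  moreover have "0 < v \<bullet> (t *\<^sub>R c)"
    using \<open>0 < t\<close> \<open>v \<bullet> c = 1\<close> by simp
  ultimately show ?thesis
    by blast
qed

lemma rel_interior_depth_level_set_subset_open_halfspace:
  fixes x :: "'i \<Rightarrow> 'a::euclidean_space"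
  assumes "finite I" "P \<subseteq> I" "\<forall>j\<in>P. 0 < v \<bullet> x j" "0 \<le> \<beta>"
    and many: "\<beta> * real (card I) * real DIM('a) < real (card P)"
    and halfspace: "depth_level_set \<beta> I x \<subseteq> {y. 0 < v \<bullet> y} \<union> {0}"
  shows "rel_interior (depth_level_set \<beta> I x) \<subseteq> {y. 0 < v \<bullet> y}"
proof -
  let ?S = "depth_level_set \<beta> I x"
  have "0 \<notin> rel_interior ?S"
  proof
    assume "0 \<in> rel_interior ?S"
    have "0 \<le> \<beta> * real (card I) * real DIM('a)"
      using \<open>0 \<le> \<beta>\<close> by simp
    then have "P \<noteq> {}"
      using many by auto
    moreover have "\<beta> * real (card I) \<le> real (tukey_depth I x 0)"
      using \<open>0 \<in> rel_interior ?S\<close> rel_interior_subset by (force simp: depth_level_set_def)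
    moreover have "\<beta> * real (card I) * real DIM('a) \<le> real (card P)"
      using many by simp
    ultimately obtain y where "0 < v \<bullet> y" "y \<in> ?S"
      using deep_point_in_open_halfspace[OF assms(1,2) _ assms(3)]
      by (auto simp: depth_level_set_def)
    then obtain e where "e > 0" "0 - e *\<^sub>R (y - 0) \<in> ?S"
      using rel_interior_extend_beyond[OF \<open>0 \<in> rel_interior ?S\<close>] by blast
    moreover have "v \<bullet> (0 - e *\<^sub>R (y - 0)) < 0"
      using \<open>e > 0\<close> \<open>0 < v \<bullet> y\<close> by simp
    ultimately show False
      using halfspace by force
  qed
  then show ?thesis
    using halfspace rel_interior_subset by blast
qed

theorem lemma3:
  fixes x :: "nat \<Rightarrow> 'a::euclidean_space" and n :: nat and J :: "nat set" and v :: 'a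
  defines "D \<equiv> real DIM('a)"
  assumes J_sub: "J \<subseteq> {..<n}"
    and J_card: "real (card J) > real n - real n / (2 * D + 2)"
    and v_nz: "v \<noteq> 0"
    and J_half: "\<forall>j\<in>J. v \<bullet> x j \<ge> 0"
    and J_line: "\<forall>j\<in>J. v \<bullet> x j = 0 \<longrightarrow> x j = 0"
  shows "rel_interior (depth_level_set (1 / (2 * D + 2)) {..<n} x) \<subseteq> convex hull (x ` J)
       \<and> convex hull (x ` J) \<subseteq> {y. v \<bullet> y > 0} \<union> {0}
       \<and> (real (card {j\<in>J. v \<bullet> x j = 0}) < real n / 2 \<longrightarrow>
            rel_interior (depth_level_set (1 / (2 * D + 2)) {..<n} x) \<subseteq> {y. v \<bullet> y > 0})"
proof -
  let ?S = "depth_level_set (1 / (2 * D + 2)) {..<n} x"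
  have "D \<ge> 1" and "finite J"
    using DIM_positive[where 'a='a] J_sub finite_subset by (auto simp: D_def)
  have "real (card ({..<n} - J)) = real n - real (card J)"
    using card_Diff_subset[OF \<open>finite J\<close> J_sub] card_mono[OF _ J_sub] by (simp add: of_nat_diff)
  then have S_hull: "?S \<subseteq> convex hull (x ` J)"
    using J_card J_sub by (intro depth_level_set_subset_convex_hull) auto
  have hull_halfspace: "convex hull (x ` J) \<subseteq> {y. 0 < v \<bullet> y} \<union> {0}"
    using J_half J_line by (intro hull_minimal convex_open_halfspace_Un_zero) force
  have "rel_interior ?S \<subseteq> {y. 0 < v \<bullet> y}" if "real (card {j\<in>J. v \<bullet> x j = 0}) < real n / 2"
  proof (rule rel_interior_depth_level_set_subset_open_halfspace)
    let ?P = "{j\<in>J. 0 < v \<bullet> x j}"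
    have "J - {j. 0 < v \<bullet> x j} = {j\<in>J. v \<bullet> x j = 0}"
      using J_half by force
    then have "real (card J) = real (card ?P) + real (card {j\<in>J. v \<bullet> x j = 0})"
      using card_Int_Diff[OF \<open>finite J\<close>, of "{j. 0 < v \<bullet> x j}"] by (simp add: Int_def conj_commute)
    moreover have "real n - real n / (2 * D + 2) - real n / 2 = 1 / (2 * D + 2) * real n * D"
      using \<open>D \<ge> 1\<close> by (simp add: field_simps)
    ultimately have "1 / (2 * D + 2) * real n * D < real (card ?P)"
      using J_card that by argo
    then show "1 / (2 * D + 2) * real (card {..<n}) * real DIM('a) < real (card ?P)"
      by (simp add: D_def)
  qed (use J_sub S_hull hull_halfspace \<open>D \<ge> 1\<close> in auto)
  then show ?thesis
    using S_hull hull_halfspace rel_interior_subset by blast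
qed

end
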